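(* Let $D$ be an integral domain, $n\ge0$, $u_1,\dots,u_n\in D^*$, $R_n=D[Z_0,\dots,Z_n]$ a polynomial ring in $n+1$ variables over $D$, and $a_1,\dots,a_n,b_1,\dots,b_n$ positive integers with $\gcd(a_i,b_1\cdots b_i)=1$ for each $i\in\{1,\dots,n\}$. Then $$I_n:=\big(u_1Z_1^{a_1}+Z_0^{b_1},\dots,u_nZ_n^{a_n}+Z_{n-1}^{b_n}\big)$$ is a prime ideal of $R_n$ and $Z_n\notin I_n$. *)

theory Defs
  imports "HOL-Library.Poly_Mapping" "HOL-Algebra.Ideal"
begin

text \<open>Multivariate polynomials over a commutative ring 'a, in the variables
  Z_0, Z_1, Z_2, ... (indexed by nat): a polynomial is a finitely supported map
  from monomials (finitely supported exponent vectors) to coefficients.\<close>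

type_synonym 'a mpoly = "(nat \<Rightarrow>\<^sub>0 nat) \<Rightarrow>\<^sub>0 'a"

definition mvars :: "'a::zero mpoly \<Rightarrow> nat set" where
  "mvars p = (\<Union>m\<in>Poly_Mapping.keys p. Poly_Mapping.keys m)"

definition Var :: "nat \<Rightarrow> 'a::{zero,one} mpoly" where
  "Var i = Poly_Mapping.single (Poly_Mapping.single i 1) 1"

definition Const :: "'a::zero \<Rightarrow> 'a mpoly" where
  "Const c = Poly_Mapping.single 0 c"

definition poly_ring_upto :: "nat \<Rightarrow> ('a::comm_ring_1 mpoly) ring" where
  "poly_ring_upto n = \<lparr>carrier = {p. mvars p \<subseteq> {0..n}}, mult = (*), one = 1,
                        zero = 0, add = (+)\<rparr>"

end

theory Submission
  imports Defs "HOL-Algebra.Algebraic_Closure_Type"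
begin

text \<open>
  Let K be an algebraic closure of the fraction field of D. Choose c_0 = 1 and c_i \<in> K with
  u_i c_i^a_i = -c_(i-1)^b_i, and weights e_i = b_1...b_i a_(i+1)...a_n, so that
  a_i e_i = b_i e_(i-1). Then Z_i \<mapsto> c_i t^e_i defines a ring homomorphism R_n \<rightarrow> K[t]
  that kills every generator of I_n; its kernel is prime because K[t] is a domain, and it does
  not contain Z_n because c_n \<noteq> 0. Conversely, modulo I_n every polynomial is congruent to one
  whose monomials have Z_i-degree below a_i for i \<ge> 1, and the coprimality hypotheses make the
  weights of such monomials pairwise distinct, so such a polynomial in the kernel is zero.
  Hence I_n is exactly the kernel.
\<close>

abbreviation lookup :: "('a \<Rightarrow>\<^sub>0 'b::zero) \<Rightarrow> 'a \<Rightarrow> 'b"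
  where "lookup \<equiv> Poly_Mapping.lookup"
abbreviation keys :: "('a \<Rightarrow>\<^sub>0 'b::zero) \<Rightarrow> 'a set"
  where "keys \<equiv> Poly_Mapping.keys"
abbreviation single :: "'a \<Rightarrow> 'b::zero \<Rightarrow> 'a \<Rightarrow>\<^sub>0 'b"
  where "single \<equiv> Poly_Mapping.single"

lemma mpoly_eq_sum_single:
  fixes p :: "'a::comm_monoid_add mpoly"
  shows "p = (\<Sum>m\<in>keys p. single m (lookup p m))"
  by (rule poly_mapping_eqI)
     (auto simp: lookup_sum lookup_single when_def in_keys_iff cong: sum.cong)

lemma Var_power: "(Var i :: 'a::comm_semiring_1 mpoly) ^ k = single (single i k) 1"
  by (induction k) (simp_all add: Var_def mult_single single_add[symmetric] add.commute)

lemma Const_mult_single: "Const c * single m d = single m (c * d)"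
  by (simp add: Const_def mult_single)

lemma keys_plus_nat: "keys ((m::nat \<Rightarrow>\<^sub>0 nat) + m') = keys m \<union> keys m'"
  by (auto simp: in_keys_iff lookup_add)

lemma mvars_single_subset: "mvars (single m c) \<subseteq> keys m"
  by (simp add: mvars_def)

lemma mvars_add_subset: "mvars (p + q) \<subseteq> mvars p \<union> mvars q"
  using keys_add[of p q] by (auto simp: mvars_def)

lemma mvars_mult_subset: "mvars ((p::'a::comm_semiring_1 mpoly) * q) \<subseteq> mvars p \<union> mvars q"
  using keys_mult[of p q] by (force simp: mvars_def keys_plus_nat)

lemma mvars_uminus [simp]: "mvars (- (p::'a::ab_group_add mpoly)) = mvars p"
  by (simp add: mvars_def)

lemma poly_ring_upto_simps:
  "carrier (poly_ring_upto n) = {p. mvars p \<subseteq> {0..n}}"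
  "x \<oplus>\<^bsub>poly_ring_upto n\<^esub> y = x + y"
  "x \<otimes>\<^bsub>poly_ring_upto n\<^esub> y = x * y"
  "\<zero>\<^bsub>poly_ring_upto n\<^esub> = 0"
  "\<one>\<^bsub>poly_ring_upto n\<^esub> = 1"
  by (simp_all add: poly_ring_upto_def)

lemma ideal_poly_ring_upto_closed:
  assumes "ideal J (poly_ring_upto n)"
  shows "0 \<in> J"
    and "p \<in> J \<Longrightarrow> q \<in> J \<Longrightarrow> p + q \<in> J"
    and "p \<in> J \<Longrightarrow> q \<in> carrier (poly_ring_upto n) \<Longrightarrow> q * p \<in> J"
  using additive_subgroup.zero_closed[OF ideal.axioms(1)[OF assms]]
    additive_subgroup.a_closed[OF ideal.axioms(1)[OF assms]] ideal.I_l_closed[OF assms]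
  by (simp_all add: poly_ring_upto_simps)

lemma cring_poly_ring_upto: "cring (poly_ring_upto n :: 'a::comm_ring_1 mpoly ring)"
proof -
  let ?U = "ring_of_type_algebra :: 'a mpoly ring"
  let ?C = "{p :: 'a mpoly. mvars p \<subseteq> {0..n}}"
  interpret U: cring ?U by (rule cring_from_type_algebra)
  have a_inv: "\<ominus>\<^bsub>?U\<^esub> p = - p" for p
    by (rule U.minus_equality) (simp_all add: ring_of_type_algebra_def)
  have "subcring ?C ?U"
  proof (rule U.subcringI', rule U.subringI)
    fix p q assume "p \<in> ?C" "q \<in> ?C"
    then show "p \<otimes>\<^bsub>?U\<^esub> q \<in> ?C" "p \<oplus>\<^bsub>?U\<^esub> q \<in> ?C"
      using mvars_mult_subset[of p q] mvars_add_subset[of p q]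
      by (auto simp: ring_of_type_algebra_def)
  next
    fix p assume "p \<in> ?C"
    then show "\<ominus>\<^bsub>?U\<^esub> p \<in> ?C" by (simp add: a_inv)
  qed (auto simp: ring_of_type_algebra_def mvars_def)
  then show ?thesis
    using U.subcring_iff[of ?C] by (simp add: ring_of_type_algebra_def poly_ring_upto_def)
qed

section \<open>Substituting weighted monomials in one variable\<close>

definition monom_weight :: "(nat \<Rightarrow> nat) \<Rightarrow> (nat \<Rightarrow>\<^sub>0 nat) \<Rightarrow> nat" where
  "monom_weight e m = (\<Sum>i\<in>keys m. lookup m i * e i)"

definition monom_value :: "(nat \<Rightarrow> 'a::comm_monoid_mult) \<Rightarrow> (nat \<Rightarrow>\<^sub>0 nat) \<Rightarrow> 'a" where
  "monom_value c m = (\<Prod>i\<in>keys m. c i ^ lookup m i)"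

lemma monom_weight_add: "monom_weight e (m + m') = monom_weight e m + monom_weight e m'"
  unfolding monom_weight_def
  by (rule setsum_keys_plus_distrib[where f = "\<lambda>i k. k * e i"]) (simp_all add: algebra_simps)

lemma monom_weight_single: "monom_weight e (single i k) = k * e i"
  by (simp add: monom_weight_def)

lemma monom_weight_eq_sum:
  "finite A \<Longrightarrow> keys m \<subseteq> A \<Longrightarrow> monom_weight e m = (\<Sum>i\<in>A. lookup m i * e i)"
  unfolding monom_weight_def by (rule sum.mono_neutral_left) (auto simp: in_keys_iff)

lemma monom_value_eq_prod:
  "finite A \<Longrightarrow> keys m \<subseteq> A \<Longrightarrow> monom_value c m = (\<Prod>i\<in>A. c i ^ lookup m i)"
  unfolding monom_value_def by (rule prod.mono_neutral_left) (auto simp: in_keys_iff)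

lemma monom_value_add: "monom_value c (m + m') = monom_value c m * monom_value c m'"
proof -
  let ?A = "keys m \<union> keys m'"
  have "monom_value c (m + m') = (\<Prod>i\<in>?A. c i ^ lookup m i * c i ^ lookup m' i)"
    by (simp add: monom_value_eq_prod[of ?A] keys_plus_nat lookup_add power_add)
  then show ?thesis
    by (simp add: prod.distrib monom_value_eq_prod[of ?A])
qed

lemma monom_value_single: "monom_value c (single i k) = c i ^ k"
  by (simp add: monom_value_def)

lemma monom_value_nonzero:
  "(\<And>i. i \<in> keys m \<Longrightarrow> c i \<noteq> 0) \<Longrightarrow> monom_value c m \<noteq> (0::'a::idom)"
  by (simp add: monom_value_def)

locale coeff_embedding =
  fixes h :: "'a::comm_ring_1 \<Rightarrow> 'b::idom"
  assumes hom_add: "h (x + y) = h x + h y"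
    and hom_mult: "h (x * y) = h x * h y"
    and hom_one: "h 1 = 1"
    and hom_eq_0: "h x = 0 \<Longrightarrow> x = 0"
begin

lemma hom_zero [simp]: "h 0 = 0"
  by (metis add_0 add_cancel_right_right hom_add)

text \<open>The substitution Z_i \<mapsto> c_i t^e_i, with the coefficients mapped by h.\<close>
definition weighted_subst :: "(nat \<Rightarrow> 'b) \<Rightarrow> (nat \<Rightarrow> nat) \<Rightarrow> 'a mpoly \<Rightarrow> 'b poly" where
  "weighted_subst c e p =
     (\<Sum>m\<in>keys p. monom (h (lookup p m) * monom_value c m) (monom_weight e m))"

lemma weighted_subst_single:
  "weighted_subst c e (single m x) = monom (h x * monom_value c m) (monom_weight e m)"
  by (cases "x = 0") (simp_all add: weighted_subst_def)

lemma weighted_subst_0 [simp]: "weighted_subst c e 0 = 0"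
  by (simp add: weighted_subst_def)

lemma weighted_subst_add: "weighted_subst c e (p + q) = weighted_subst c e p + weighted_subst c e q"
  unfolding weighted_subst_def
  by (rule setsum_keys_plus_distrib) (simp_all add: hom_add distrib_right add_monom)

lemma weighted_subst_sum:
  "weighted_subst c e (\<Sum>x\<in>A. f x) = (\<Sum>x\<in>A. weighted_subst c e (f x))"
  by (induction A rule: infinite_finite_induct) (simp_all add: weighted_subst_add)

lemma weighted_subst_diff: "weighted_subst c e (p - q) = weighted_subst c e p - weighted_subst c e q"
  using weighted_subst_add[of c e "p - q" q] by simp

lemma weighted_subst_mult: "weighted_subst c e (p * q) = weighted_subst c e p * weighted_subst c e q"
proof -
  have "p * q = (\<Sum>m\<in>keys p. \<Sum>m'\<in>keys q. single (m + m') (lookup p m * lookup q m'))"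
    by (subst (1) mpoly_eq_sum_single[of p], subst (1) mpoly_eq_sum_single[of q])
       (simp add: sum_product mult_single)
  then have "weighted_subst c e (p * q) = (\<Sum>m\<in>keys p. \<Sum>m'\<in>keys q.
      monom (h (lookup p m) * monom_value c m) (monom_weight e m) *
      monom (h (lookup q m') * monom_value c m') (monom_weight e m'))"
    by (simp add: weighted_subst_sum weighted_subst_single hom_mult monom_value_add
        monom_weight_add mult_monom algebra_simps)
  then show ?thesis
    by (simp add: weighted_subst_def sum_product)
qed

lemma weighted_subst_one: "weighted_subst c e 1 = 1"
  using weighted_subst_single[of c e 0 1]
  by (simp add: hom_one one_pCons monom_0 monom_value_def monom_weight_def)

lemma weighted_subst_ring_hom:
  "weighted_subst c e \<in> ring_hom (poly_ring_upto n) ring_of_type_algebra"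
  by (rule ring_hom_memI)
     (simp_all add: poly_ring_upto_def ring_of_type_algebra_def
        weighted_subst_mult weighted_subst_add weighted_subst_one)

text \<open>Monomials of distinct weights go to distinct powers of t, so nothing cancels.\<close>
lemma weighted_subst_eq_0_iff:
  assumes "inj_on (monom_weight e) (keys p)" and "\<And>i. i \<in> mvars p \<Longrightarrow> c i \<noteq> 0"
  shows "weighted_subst c e p = 0 \<longleftrightarrow> p = 0"
proof
  assume subst_0: "weighted_subst c e p = 0"
  show "p = 0"
  proof (rule ccontr)
    assume "p \<noteq> 0"
    then obtain m where m: "m \<in> keys p" by fastforce
    have "coeff (weighted_subst c e p) (monom_weight e m) =
        (\<Sum>m'\<in>keys p. if monom_weight e m' = monom_weight e m
                          then h (lookup p m') * monom_value c m' else 0)"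
      by (simp add: weighted_subst_def coeff_sum coeff_monom)
    also have "\<dots> = h (lookup p m) * monom_value c m"
      using m inj_onD[OF assms(1) _ _ m]
      by (subst sum.remove[OF finite_keys m]) (auto intro!: sum.neutral split: if_splits)
    moreover have "h (lookup p m) * monom_value c m \<noteq> 0"
    proof -
      have "c i \<noteq> 0" if "i \<in> keys m" for i
        using assms(2) m that by (auto simp: mvars_def)
      then show ?thesis
        using m hom_eq_0 monom_value_nonzero[of m c] by (auto simp: in_keys_iff)
    qed
    ultimately show False using subst_0 by simp
  qed
qed (simp add: weighted_subst_def)

end

section \<open>Separating reduced monomials by weight\<close>

lemma coprime_lincomb_unique:
  fixes A B x y s t :: nat
  assumes "coprime A B" "x < A" "y < A" "A * s + x * B = A * t + y * B"
  shows "x = y \<and> s = t"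
proof -
  have "int A * (int t - int s) = (int x - int y) * int B"
    using arg_cong[OF assms(4), of int] by (simp add: algebra_simps)
  then have "int A dvd (int x - int y) * int B"
    by (metis dvd_triv_left)
  then have "int A dvd int x - int y"
    using assms(1) by (simp add: coprime_dvd_mult_left_iff)
  then have "x = y"
    using assms(2,3) dvd_imp_le_int[of "int x - int y" "int A"] by force
  then show ?thesis
    using assms(2,4) by simp
qed

definition chain_weight :: "(nat \<Rightarrow> nat) \<Rightarrow> (nat \<Rightarrow> nat) \<Rightarrow> nat \<Rightarrow> nat \<Rightarrow> nat" where
  "chain_weight a b n i = (\<Prod>j=1..i. b j) * (\<Prod>j=Suc i..n. a j)"

lemma chain_weight_Suc: "i \<le> n \<Longrightarrow> chain_weight a b (Suc n) i = chain_weight a b n i * a (Suc n)"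
  by (simp add: chain_weight_def)

lemma chain_weight_self: "chain_weight a b n n = (\<Prod>j=1..n. b j)"
  by (simp add: chain_weight_def)

lemma chain_weight_step:
  assumes "i \<in> {1..n}"
  shows "a i * chain_weight a b n i = b i * chain_weight a b n (i - 1)"
proof -
  obtain k where k: "i = Suc k" and "Suc k \<le> n"
    using assms by (cases i) auto
  then have "prod a {Suc k..n} = a (Suc k) * prod a {Suc (Suc k)..n}"
    by (simp add: prod.atLeast_Suc_atMost)
  then show ?thesis
    unfolding k chain_weight_def by (simp add: algebra_simps)
qed

text \<open>Reducing modulo a (Suc n), which is coprime to the top weight, recovers the top digit.\<close>
lemma chain_weight_sum_inj:
  assumes cop: "\<forall>i\<in>{1..n}. coprime (a i) (\<Prod>j=1..i. b j)"
    and bounded: "\<forall>i\<in>{1..n}. f i < a i \<and> g i < a i"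
    and eq: "(\<Sum>i\<le>n. f i * chain_weight a b n i) = (\<Sum>i\<le>n. g i * chain_weight a b n i)"
  shows "\<forall>i\<le>n. f i = g i"
  using assms
proof (induction n)
  case 0
  then show ?case by (simp add: chain_weight_def)
next
  case (Suc n)
  have split: "(\<Sum>i\<le>Suc n. k i * chain_weight a b (Suc n) i)
      = a (Suc n) * (\<Sum>i\<le>n. k i * chain_weight a b n i) + k (Suc n) * (\<Prod>j=1..Suc n. b j)"
    for k :: "nat \<Rightarrow> nat"
    by (simp add: chain_weight_Suc chain_weight_self sum_distrib_left algebra_simps)
  have "f (Suc n) = g (Suc n) \<and>
      (\<Sum>i\<le>n. f i * chain_weight a b n i) = (\<Sum>i\<le>n. g i * chain_weight a b n i)"
  proof (rule coprime_lincomb_unique)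
    show "coprime (a (Suc n)) (\<Prod>j=1..Suc n. b j)"
      by (rule bspec[OF Suc.prems(1)]) simp
  qed (use Suc.prems(2,3) in \<open>simp_all only: split, auto\<close>)
  with Suc.IH Suc.prems show ?case
    by (auto simp: le_Suc_eq)
qed

definition reduced_monom :: "nat \<Rightarrow> (nat \<Rightarrow> nat) \<Rightarrow> (nat \<Rightarrow>\<^sub>0 nat) \<Rightarrow> bool" where
  "reduced_monom n a m \<longleftrightarrow> (\<forall>i\<in>{1..n}. lookup m i < a i)"

lemma monom_weight_chain_weight_inj_on:
  assumes "\<forall>i\<in>{1..n}. coprime (a i) (\<Prod>j=1..i. b j)"
  shows "inj_on (monom_weight (chain_weight a b n)) {m. keys m \<subseteq> {0..n} \<and> reduced_monom n a m}"
proof (rule inj_onI, rule poly_mapping_eqI)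
  fix m m' i
  assume m: "m \<in> {m. keys m \<subseteq> {0..n} \<and> reduced_monom n a m}"
    and m': "m' \<in> {m. keys m \<subseteq> {0..n} \<and> reduced_monom n a m}"
    and "monom_weight (chain_weight a b n) m = monom_weight (chain_weight a b n) m'"
  then have "\<forall>i\<le>n. lookup m i = lookup m' i"
    using assms by (intro chain_weight_sum_inj[of n a b])
      (auto simp: reduced_monom_def monom_weight_eq_sum[of "{..n}"] atLeast0AtMost)
  moreover have "lookup m i = lookup m' i" if "\<not> i \<le> n"
  proof -
    have "i \<notin> keys m" "i \<notin> keys m'"
      using m m' that by auto
    then show ?thesis by (simp add: in_keys_iff)
  qed
  ultimately show "lookup m i = lookup m' i" by (cases "i \<le> n") auto
qed

section \<open>A chain of roots in the algebraic closure\<close>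

definition to_closure :: "'a::idom \<Rightarrow> 'a fract alg_closure" where
  "to_closure x = to_ac (Fract x 1)"

interpretation to_closure: coeff_embedding to_closure
proof
  fix x y :: 'a
  show "to_closure (x + y) = to_closure x + to_closure y"
    by (simp add: to_closure_def flip: to_ac_add)
  show "to_closure (x * y) = to_closure x * to_closure y"
    by (simp add: to_closure_def flip: to_ac_mult)
  show "to_closure 1 = 1"
    by (simp add: to_closure_def One_fract_def[symmetric])
  show "to_closure x = 0 \<Longrightarrow> x = 0"
    by (simp add: to_closure_def Zero_fract_def eq_fract)
qed

primrec chain_root ::
  "(nat \<Rightarrow> 'a::idom) \<Rightarrow> (nat \<Rightarrow> nat) \<Rightarrow> (nat \<Rightarrow> nat) \<Rightarrow> nat \<Rightarrow> 'a fract alg_closure"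
where
  "chain_root u a b 0 = 1"
| "chain_root u a b (Suc i) =
     (SOME x. to_closure (u (Suc i)) * x ^ a (Suc i) = - (chain_root u a b i ^ b (Suc i)))"

lemma chain_root_step:
  assumes "0 < i" "0 < a i" "u i \<noteq> 0"
  shows "to_closure (u i) * chain_root u a b i ^ a i = - (chain_root u a b (i - 1) ^ b i)"
proof -
  obtain k where k: "i = Suc k" using assms(1) by (cases i) auto
  obtain y where "y ^ a i = - (chain_root u a b k ^ b i) / to_closure (u i)"
    using nth_root_exists[OF assms(2)] by blast
  moreover have "to_closure (u i) \<noteq> 0"
    using assms(3) to_closure.hom_eq_0 by blast
  ultimately have "\<exists>y. to_closure (u i) * y ^ a i = - (chain_root u a b k ^ b i)"
    by (intro exI[of _ y]) simp
  then show ?thesis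
    unfolding k by (simp only: chain_root.simps diff_Suc_1) (rule someI_ex)
qed

lemma chain_root_nonzero:
  assumes "\<forall>i\<in>{1..n}. 0 < a i \<and> u i \<noteq> 0" and "i \<le> n"
  shows "chain_root u a b i \<noteq> 0"
  using assms(2)
proof (induction i)
  case (Suc k)
  have "to_closure (u (Suc k)) * chain_root u a b (Suc k) ^ a (Suc k)
      = - (chain_root u a b k ^ b (Suc k))"
    using chain_root_step[of "Suc k" a u b] assms(1) Suc.prems
    by (simp del: chain_root.simps)
  moreover have "chain_root u a b k \<noteq> 0" and "0 < a (Suc k)"
    using Suc assms(1) by simp_all
  ultimately show ?case
    by (metis mult_zero_right neg_equal_0_iff_equal power_not_zero zero_power)
qed simp

section \<open>Reduction modulo the binomials\<close>

definition chain_binomial ::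
  "(nat \<Rightarrow> 'a::comm_ring_1) \<Rightarrow> (nat \<Rightarrow> nat) \<Rightarrow> (nat \<Rightarrow> nat) \<Rightarrow> nat \<Rightarrow> 'a mpoly"
  where "chain_binomial u a b i = Const (u i) * Var i ^ a i + Var (i - 1) ^ b i"

lemma chain_binomial_eq_singles:
  "chain_binomial u a b i = single (single i (a i)) (u i) + single (single (i - 1) (b i)) 1"
  by (simp add: chain_binomial_def Var_power Const_mult_single)

lemma chain_binomial_in_carrier:
  assumes "i \<in> {1..n}"
  shows "chain_binomial u a b i \<in> carrier (poly_ring_upto n)"
proof -
  have "mvars (single (single j k) c) \<subseteq> {0..n}" if "j \<le> n" for j k and c :: 'a
    using mvars_single_subset[of "single j k" c] that by (cases "k = 0") auto
  moreover have "mvars (chain_binomial u a b i) \<subseteq>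
      mvars (single (single i (a i)) (u i)) \<union> mvars (single (single (i - 1) (b i)) (1::'a))"
    by (simp add: chain_binomial_eq_singles mvars_add_subset)
  ultimately show ?thesis
    using assms by (simp add: poly_ring_upto_simps)
      (meson atLeastAtMost_iff diff_le_self le_sup_iff order_trans)
qed

lemma single_eq_chain_binomial_multiple:
  assumes "u i * v = 1"
  shows "single (m + single i (a i)) x
     = single m (x * v) * chain_binomial u a b i + single (m + single (i - 1) (b i)) (- (x * v))"
proof -
  have "x * v * u i = x"
    using assms by (metis mult.assoc mult.commute mult_1_right)
  then show ?thesis
    by (simp add: chain_binomial_eq_singles distrib_left mult_single single_uminus)
qed

text \<open>A termination measure for the rewriting Z_i^a_i \<leadsto> Z_(i-1)^b_i:
  b_i w_(i-1) < w_i \<le> a_i w_i for w_i = (b_1 + 1)...(b_i + 1).\<close>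
definition reduction_weight :: "(nat \<Rightarrow> nat) \<Rightarrow> nat \<Rightarrow> nat" where
  "reduction_weight b i = (\<Prod>j=1..i. Suc (b j))"

lemma reduction_weight_decreases:
  assumes "0 < i" "0 < a i"
  shows "monom_weight (reduction_weight b) (m + single (i - 1) (b i))
           < monom_weight (reduction_weight b) (m + single i (a i))"
proof -
  obtain k where k: "i = Suc k" using assms(1) by (cases i) auto
  have "b i * reduction_weight b k < Suc (b i) * reduction_weight b k"
    by (simp add: reduction_weight_def)
  also have "\<dots> \<le> a i * (Suc (b i) * reduction_weight b k)"
    using assms(2) by simp
  finally show ?thesis
    by (simp add: monom_weight_add monom_weight_single k reduction_weight_def mult.commute)
qed

definition reduced_mpoly :: "nat \<Rightarrow> (nat \<Rightarrow> nat) \<Rightarrow> 'a::comm_ring_1 mpoly \<Rightarrow> bool" where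
  "reduced_mpoly n a r \<longleftrightarrow>
     r \<in> carrier (poly_ring_upto n) \<and> (\<forall>m\<in>keys r. reduced_monom n a m)"

lemma reduced_mpoly_0: "reduced_mpoly n a 0"
  by (simp add: reduced_mpoly_def poly_ring_upto_simps mvars_def)

lemma reduced_mpoly_single:
  "keys m \<subseteq> {0..n} \<Longrightarrow> reduced_monom n a m \<Longrightarrow> reduced_mpoly n a (single m x)"
  using mvars_single_subset[of m x] by (auto simp: reduced_mpoly_def poly_ring_upto_simps)

lemma reduced_mpoly_add:
  "reduced_mpoly n a r \<Longrightarrow> reduced_mpoly n a s \<Longrightarrow> reduced_mpoly n a (r + s)"
  using mvars_add_subset[of r s] keys_add[of r s]
  by (auto simp: reduced_mpoly_def poly_ring_upto_simps)

lemma split_monom: "k \<le> lookup m i \<Longrightarrow> m = (m - single i k) + single i (k::nat)"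
  by (intro poly_mapping_eqI) (auto simp: lookup_add lookup_minus lookup_single when_def)

lemma reduce_monom:
  fixes J :: "'a::comm_ring_1 mpoly set"
  assumes J: "ideal J (poly_ring_upto n)" and gens: "chain_binomial u a b ` {1..n} \<subseteq> J"
    and units: "\<forall>i\<in>{1..n}. u i dvd 1" and pos: "\<forall>i\<in>{1..n}. 0 < a i"
  shows "keys m \<subseteq> {0..n} \<Longrightarrow> \<exists>r. reduced_mpoly n a r \<and> single m x - r \<in> J"
proof (induction "monom_weight (reduction_weight b) m" arbitrary: m x rule: less_induct)
  case less
  show ?case
  proof (cases "reduced_monom n a m")
    case True
    have "single m x - single m x \<in> J"
      using ideal_poly_ring_upto_closed(1)[OF J] by simp
    with reduced_mpoly_single[OF less.prems True] show ?thesis by blast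
  next
    case False
    then obtain i where i: "i \<in> {1..n}" and "a i \<le> lookup m i"
      by (auto simp: reduced_monom_def not_less)
    define m0 where "m0 = m - single i (a i)"
    have m: "m = m0 + single i (a i)"
      unfolding m0_def by (rule split_monom) fact
    then have m0: "keys m0 \<subseteq> {0..n}"
      using less.prems by (auto simp: keys_plus_nat)
    define m' where "m' = m0 + single (i - 1) (b i)"
    obtain v where v: "u i * v = 1"
      using units i by (metis dvdE)
    have "keys m' \<subseteq> {0..n}"
      using m0 i by (auto simp: m'_def keys_plus_nat)
    moreover have "monom_weight (reduction_weight b) m' < monom_weight (reduction_weight b) m"
      unfolding m m'_def using i pos by (intro reduction_weight_decreases) auto
    ultimately obtain r where r: "reduced_mpoly n a r" "single m' (- (x * v)) - r \<in> J"
      using less.hyps by blast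
    have "single m0 (x * v) * chain_binomial u a b i \<in> J"
    proof (rule ideal_poly_ring_upto_closed(3)[OF J])
      show "chain_binomial u a b i \<in> J"
        using gens i by blast
      show "single m0 (x * v) \<in> carrier (poly_ring_upto n)"
        using m0 mvars_single_subset[of m0 "x * v"] by (simp add: poly_ring_upto_simps)
    qed
    then have "single m0 (x * v) * chain_binomial u a b i + (single m' (- (x * v)) - r) \<in> J"
      using ideal_poly_ring_upto_closed(2)[OF J _ r(2)] by blast
    moreover have "single m x = single m0 (x * v) * chain_binomial u a b i + single m' (- (x * v))"
      unfolding m m'_def using v by (rule single_eq_chain_binomial_multiple)
    ultimately have "single m x - r \<in> J"
      by (simp add: add_diff_eq)
    with r(1) show ?thesis by blast
  qed
qed

lemma reduce_mpoly:
  fixes J :: "'a::comm_ring_1 mpoly set"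
  assumes J: "ideal J (poly_ring_upto n)" and gens: "chain_binomial u a b ` {1..n} \<subseteq> J"
    and units: "\<forall>i\<in>{1..n}. u i dvd 1" and pos: "\<forall>i\<in>{1..n}. 0 < a i"
    and p: "p \<in> carrier (poly_ring_upto n)"
  shows "\<exists>r. reduced_mpoly n a r \<and> p - r \<in> J"
proof -
  have "\<exists>r. reduced_mpoly n a r \<and> (\<Sum>m\<in>A. single m (lookup p m)) - r \<in> J"
    if "A \<subseteq> keys p" for A
    using finite_subset[OF that finite_keys] that
  proof (induction A rule: finite_induct)
    case empty
    show ?case
      using ideal_poly_ring_upto_closed(1)[OF J] reduced_mpoly_0 by force
  next
    case (insert m A)
    have "keys m \<subseteq> {0..n}"
      using insert.prems p by (auto simp: poly_ring_upto_simps mvars_def)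
    then obtain r1 where r1: "reduced_mpoly n a r1" "single m (lookup p m) - r1 \<in> J"
      using reduce_monom[OF J gens units pos] by blast
    obtain r2 where r2: "reduced_mpoly n a r2" "(\<Sum>m\<in>A. single m (lookup p m)) - r2 \<in> J"
      using insert by blast
    have "(\<Sum>m\<in>insert m A. single m (lookup p m)) - (r1 + r2)
        = (single m (lookup p m) - r1) + ((\<Sum>m\<in>A. single m (lookup p m)) - r2)"
      using insert.hyps by (simp add: algebra_simps)
    also have "\<dots> \<in> J"
      using ideal_poly_ring_upto_closed(2)[OF J r1(2) r2(2)] .
    finally show ?case
      using reduced_mpoly_add[OF r1(1) r2(1)] by blast
  qed
  from this[of "keys p"] show ?thesis
    by (simp flip: mpoly_eq_sum_single)
qed

lemma ideal_kernel_type_algebra: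
  assumes "ring R" and "f \<in> ring_hom R (ring_of_type_algebra :: 'b::comm_ring_1 ring)"
  shows "ideal {x \<in> carrier R. f x = 0} R"
proof -
  interpret T: cring "ring_of_type_algebra :: 'b ring"
    by (rule cring_from_type_algebra)
  have "ring_hom_ring R ring_of_type_algebra f"
    by (rule ring_hom_ringI2[OF assms(1) T.ring_axioms assms(2)])
  then show ?thesis
    using ring_hom_ring.kernel_is_ideal by (fastforce simp: a_kernel_def' ring_of_type_algebra_def)
qed

lemma primeideal_kernel_type_algebra:
  assumes "cring R" and "f \<in> ring_hom R (ring_of_type_algebra :: 'b::idom ring)"
  shows "primeideal {x \<in> carrier R. f x = 0} R"
proof (rule primeidealI[OF ideal_kernel_type_algebra assms(1)])
  show "ring R"
    using assms(1) by (rule cring.axioms(1))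
  show "f \<in> ring_hom R ring_of_type_algebra"
    by (rule assms(2))
  have "f \<one>\<^bsub>R\<^esub> = 1"
    using ring_hom_one[OF assms(2)] by (simp add: ring_of_type_algebra_def)
  then show "carrier R \<noteq> {x \<in> carrier R. f x = 0}"
    using monoid.one_closed[OF ring.is_monoid[OF \<open>ring R\<close>]] by force
  fix x y assume "x \<in> carrier R" "y \<in> carrier R" "x \<otimes>\<^bsub>R\<^esub> y \<in> {x \<in> carrier R. f x = 0}"
  then show "x \<in> {x \<in> carrier R. f x = 0} \<or> y \<in> {x \<in> carrier R. f x = 0}"
    using ring_hom_mult[OF assms(2)] by (simp add: ring_of_type_algebra_def)
qed

lemma weighted_subst_chain_binomial:
  assumes "\<forall>i\<in>{1..n}. 0 < a i \<and> u i \<noteq> 0" and "i \<in> {1..n}"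
  shows "to_closure.weighted_subst (chain_root u a b) (chain_weight a b n) (chain_binomial u a b i) = 0"
proof -
  have "to_closure.weighted_subst (chain_root u a b) (chain_weight a b n) (chain_binomial u a b i)
      = monom (to_closure (u i) * chain_root u a b i ^ a i) (a i * chain_weight a b n i)
        + monom (chain_root u a b (i - 1) ^ b i) (b i * chain_weight a b n (i - 1))"
    by (simp add: chain_binomial_eq_singles to_closure.weighted_subst_add
        to_closure.weighted_subst_single monom_value_single monom_weight_single to_closure.hom_one
        del: chain_root.simps)
  also have "\<dots> = 0"
  proof -
    have "0 < i" "0 < a i" "u i \<noteq> 0"
      using assms by auto
    then show ?thesis
      using chain_root_step[of i a u b] chain_weight_step[OF assms(2), of a b]
      by (simp add: add_monom)
  qed
  finally show ?thesis .
qed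

lemma reduced_mpoly_weighted_subst_eq_0_iff:
  fixes u :: "nat \<Rightarrow> 'a::idom"
  assumes cop: "\<forall>i\<in>{1..n}. coprime (a i) (\<Prod>j=1..i. b j)"
    and roots: "\<forall>i\<in>{1..n}. 0 < a i \<and> u i \<noteq> 0"
    and r: "reduced_mpoly n a r"
  shows "to_closure.weighted_subst (chain_root u a b) (chain_weight a b n) r = 0 \<longleftrightarrow> r = 0"
proof (rule to_closure.weighted_subst_eq_0_iff)
  show "inj_on (monom_weight (chain_weight a b n)) (keys r)"
    using r by (intro inj_on_subset[OF monom_weight_chain_weight_inj_on[OF cop]])
      (auto simp: reduced_mpoly_def poly_ring_upto_simps mvars_def)
  show "chain_root u a b i \<noteq> 0" if "i \<in> mvars r" for i
    using r that by (intro chain_root_nonzero[OF roots]) (auto simp: reduced_mpoly_def poly_ring_upto_simps)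
qed

lemma genideal_chain_binomials_eq_kernel:
  fixes u :: "nat \<Rightarrow> 'a::idom"
  assumes units: "\<forall>i\<in>{1..n}. u i dvd 1" and pos: "\<forall>i\<in>{1..n}. 0 < a i"
    and cop: "\<forall>i\<in>{1..n}. coprime (a i) (\<Prod>j=1..i. b j)"
  shows "genideal (poly_ring_upto n) (chain_binomial u a b ` {1..n})
    = {p \<in> carrier (poly_ring_upto n).
         to_closure.weighted_subst (chain_root u a b) (chain_weight a b n) p = 0}"
    (is "?J = ?K")
proof -
  let ?R = "poly_ring_upto n :: 'a mpoly ring"
  let ?\<Phi> = "to_closure.weighted_subst (chain_root u a b) (chain_weight a b n)"
  interpret R: cring ?R
    by (rule cring_poly_ring_upto)
  have gens: "chain_binomial u a b ` {1..n} \<subseteq> carrier ?R"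
    using chain_binomial_in_carrier by blast
  have roots: "\<forall>i\<in>{1..n}. 0 < a i \<and> u i \<noteq> 0"
    using pos units by auto
  have "?J \<subseteq> ?K"
  proof (rule R.genideal_minimal)
    show "ideal ?K ?R"
      by (rule ideal_kernel_type_algebra[OF R.ring_axioms to_closure.weighted_subst_ring_hom])
    show "chain_binomial u a b ` {1..n} \<subseteq> ?K"
    proof (rule image_subsetI)
      fix i assume "i \<in> {1..n}"
      then show "chain_binomial u a b i \<in> ?K"
        using gens weighted_subst_chain_binomial[OF roots] by blast
    qed
  qed
  moreover have "p \<in> ?J" if p: "p \<in> ?K" for p
  proof -
    obtain r where r: "reduced_mpoly n a r" "p - r \<in> ?J"
      using reduce_mpoly[OF R.genideal_ideal[OF gens] R.genideal_self[OF gens] units pos] p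
      by blast
    then have "?\<Phi> (p - r) = 0"
      using \<open>?J \<subseteq> ?K\<close> by auto
    then have "?\<Phi> r = 0"
      using p by (simp add: to_closure.weighted_subst_diff)
    then have "r = 0"
      using reduced_mpoly_weighted_subst_eq_0_iff[OF cop roots r(1)] by blast
    then show "p \<in> ?J"
      using r(2) by simp
  qed
  ultimately show ?thesis
    by (intro equalityI subsetI) auto
qed

theorem lemma4p1:
  fixes u :: "nat \<Rightarrow> 'a::idom" and a b :: "nat \<Rightarrow> nat" and n :: nat
  assumes units: "\<forall>i\<in>{1..n}. u i dvd 1"
    and pos: "\<forall>i\<in>{1..n}. a i > 0 \<and> b i > 0"
    and cop: "\<forall>i\<in>{1..n}. coprime (a i) (\<Prod>j=1..i. b j)"
  shows "primeideal
           (genideal (poly_ring_upto n)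
              {Const (u i) * Var i ^ a i + Var (i - 1) ^ b i | i. i \<in> {1..n}})
           (poly_ring_upto n)
       \<and> Var n \<notin> genideal (poly_ring_upto n)
              {Const (u i) * Var i ^ a i + Var (i - 1) ^ b i | i. i \<in> {1..n}}"
proof -
  let ?R = "poly_ring_upto n :: 'a mpoly ring"
  let ?\<Phi> = "to_closure.weighted_subst (chain_root u a b) (chain_weight a b n)"
  have gens: "{Const (u i) * Var i ^ a i + Var (i - 1) ^ b i | i. i \<in> {1..n}}
      = chain_binomial u a b ` {1..n}"
    by (auto simp: chain_binomial_def)
  have kernel: "genideal ?R (chain_binomial u a b ` {1..n}) = {p \<in> carrier ?R. ?\<Phi> p = 0}"
    using pos by (intro genideal_chain_binomials_eq_kernel units cop) auto
  have "primeideal {p \<in> carrier ?R. ?\<Phi> p = 0} ?R"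
    by (rule primeideal_kernel_type_algebra[OF cring_poly_ring_upto to_closure.weighted_subst_ring_hom])
  moreover have "chain_root u a b n \<noteq> 0"
    using pos units by (intro chain_root_nonzero[of n]) auto
  then have "?\<Phi> (Var n) \<noteq> 0"
    by (simp add: Var_def to_closure.weighted_subst_single monom_value_single to_closure.hom_one
        del: chain_root.simps)
  ultimately show ?thesis
    unfolding gens kernel by simp
qed

end
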